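(* Let $\mathcal{C}$ be a flag code of type $(t_1,\ldots,t_r)$ on $\mathbb{F}_q^n$. Then $\mathcal{C}$ is an optimum distance flag code if and only if $\mathcal{C}$ is disjoint and, for every $i\in\{1,\ldots,r\}$, the projected code $\mathcal{C}_i$ satisfies $d_S(\mathcal{C}_i)=\min\{2t_i,2(n-t_i)\}$.
   Context: $q$ is a prime power, $n>1$. For subspaces $\mathcal{U},\mathcal{V}$ of $\mathbb{F}_q^n$, $d_S(\mathcal{U},\mathcal{V})=\dim(\mathcal{U}+\mathcal{V})-\dim(\mathcal{U}\cap\mathcal{V})$; for a set $\mathcal{D}$ of subspaces, $d_S(\mathcal{D})$ is the minimum of $d_S$ over pairs of distinct elements (and $0$ if $|\mathcal{D}|=1$). A flag of type $(t_1,\ldots,t_r)$, $0<t_1<\cdots<t_r<n$, is a tuple $(\mathcal{F}_1,\ldots,\mathcal{F}_r)$ of nested subspaces $\mathcal{F}_1\subsetneq\cdots\subsetneq\mathcal{F}_r$ of $\mathbb{F}_q^n$ with $\dim\mathcal{F}_i=t_i$. A flag code of that type is a set of at least two such flags; its distance $d_f(\mathcal{C})$ is the minimum over distinct $\mathcal{F},\mathcal{F}'\in\mathcal{C}$ of $\sum_{i=1}^r d_S(\mathcal{F}_i,\mathcal{F}'_i)$. It is an optimum distance flag code if $d_f(\mathcal{C})= 2\left(\sum_{t_i \leq \lfloor n/2\rfloor} t_i + \sum_{t_i > \lfloor n/2\rfloor} (n-t_i)\right)$. The $i$-projected code is $\mathcal{C}_i=\{\mathcal{F}_i : (\mathcal{F}_1,\ldots,\mathcal{F}_r)\in\mathcal{C}\}$.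 The code $\mathcal{C}$ is disjoint if $|\mathcal{C}_1|=\cdots=|\mathcal{C}_r|=|\mathcal{C}|$. *)

theory Defs
  imports "HOL-Analysis.Analysis"
begin

text \<open>Ambient space F_q^n is modelled as the type 'a^'n with 'a a finite field
  (so q = CARD('a) is a prime power) and n = CARD('n).\<close>

definition is_subspace :: "('a::field ^ 'n) set \<Rightarrow> bool" where
  "is_subspace U \<longleftrightarrow> vec.subspace U"

definition sdim :: "('a::field ^ 'n) set \<Rightarrow> nat" where
  "sdim U = vec.dim U"

definition subspace_sum :: "('a::field ^ 'n) set \<Rightarrow> ('a ^ 'n) set \<Rightarrow> ('a ^ 'n) set" where
  "subspace_sum U V = {u + v | u v. u \<in> U \<and> v \<in> V}"

definition dS :: "('a::field ^ 'n) set \<Rightarrow> ('a ^ 'n) set \<Rightarrow> nat" where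
  "dS U V = sdim (subspace_sum U V) - sdim (U \<inter> V)"

definition dS_code :: "('a::field ^ 'n) set set \<Rightarrow> nat" where
  "dS_code D = (if card D \<le> 1 then 0
     else Min {dS U V | U V. U \<in> D \<and> V \<in> D \<and> U \<noteq> V})"

definition flag_type :: "nat \<Rightarrow> nat list \<Rightarrow> bool" where
  "flag_type n ts \<longleftrightarrow> ts \<noteq> [] \<and> sorted_wrt (<) ts \<and> (\<forall>t\<in>set ts. 0 < t \<and> t < n)"

definition is_flag :: "nat list \<Rightarrow> ('a::field ^ 'n) set list \<Rightarrow> bool" where
  "is_flag ts F \<longleftrightarrow> length F = length ts
     \<and> (\<forall>i < length ts. is_subspace (F ! i) \<and> sdim (F ! i) = ts ! i)
     \<and> (\<forall>i. Suc i < length F \<longrightarrow> F ! i \<subset> F ! Suc i)"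

definition flag_code :: "nat list \<Rightarrow> ('a::field ^ 'n) set list set \<Rightarrow> bool" where
  "flag_code ts C \<longleftrightarrow> finite C \<and> card C \<ge> 2 \<and> (\<forall>F\<in>C. is_flag ts F)"

definition flag_dist :: "('a::field ^ 'n) set list \<Rightarrow> ('a ^ 'n) set list \<Rightarrow> nat" where
  "flag_dist F F' = (\<Sum>i < length F. dS (F ! i) (F' ! i))"

definition flag_code_dist :: "('a::field ^ 'n) set list set \<Rightarrow> nat" where
  "flag_code_dist C = Min {flag_dist F F' | F F'. F \<in> C \<and> F' \<in> C \<and> F \<noteq> F'}"

definition optimum_distance :: "nat \<Rightarrow> nat list \<Rightarrow> ('a::field ^ 'n) set list set \<Rightarrow> bool" where
  "optimum_distance n ts C \<longleftrightarrow>
     flag_code_dist C = 2 * (\<Sum>i < length ts. if ts ! i \<le> n div 2 then ts ! i else n - ts ! i)"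

text \<open>i-projected code (0-based index).\<close>
definition projected :: "('a::field ^ 'n) set list set \<Rightarrow> nat \<Rightarrow> ('a ^ 'n) set set" where
  "projected C i = (\<lambda>F. F ! i) ` C"

definition disjoint_flag_code :: "nat list \<Rightarrow> ('a::field ^ 'n) set list set \<Rightarrow> bool" where
  "disjoint_flag_code ts C \<longleftrightarrow> (\<forall>i < length ts. card (projected C i) = card C)"

end

theory Submission
  imports Defs
begin

text \<open>Two subspaces of dimension \<open>t\<close> are at subspace distance at most \<open>2 min(t, n - t)\<close>,
  so the bound in the definition of an optimum distance flag code is the sum of the largest
  possible distances of the projected components. Hence the flag distance attains it exactly
  when, for every pair of distinct flags, every component pair is at maximal distance. This
  condition is also equivalent to the right-hand side: maximal component distances are
  positive, so distinct flags have distinct components (disjointness), and then the minimum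
  distance of each projected code is the maximum possible. Only the dimensions of the
  components enter the argument.\<close>

lemma Min_eq_upper_bound_iff:
  fixes m :: "'a::linorder"
  assumes "finite A" "A \<noteq> {}" "\<And>a. a \<in> A \<Longrightarrow> a \<le> m"
  shows "Min A = m \<longleftrightarrow> (\<forall>a\<in>A. a = m)"
  using assms by (auto simp: Min_eq_iff intro: order.antisym)

lemma Min_pairwise_eq_upper_bound_iff:
  fixes f :: "'a \<Rightarrow> 'a \<Rightarrow> 'b::linorder"
  assumes "finite A" "2 \<le> card A"
    and "\<And>x y. x \<in> A \<Longrightarrow> y \<in> A \<Longrightarrow> x \<noteq> y \<Longrightarrow> f x y \<le> m"
  shows "Min {f x y | x y. x \<in> A \<and> y \<in> A \<and> x \<noteq> y} = m \<longleftrightarrow>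
           (\<forall>x\<in>A. \<forall>y\<in>A. x \<noteq> y \<longrightarrow> f x y = m)"
proof -
  let ?V = "{f x y | x y. x \<in> A \<and> y \<in> A \<and> x \<noteq> y}"
  have "?V \<subseteq> (\<lambda>(x, y). f x y) ` (A \<times> A)"
    by auto
  then have "finite ?V"
    by (rule finite_subset) (use assms(1) in simp)
  moreover obtain x y where "x \<in> A" "y \<in> A" "x \<noteq> y"
    using assms(1,2) card_le_Suc0_iff_eq[of A] by fastforce
  then have "?V \<noteq> {}"
    by blast
  ultimately show ?thesis
    using assms(3) by (subst Min_eq_upper_bound_iff) blast+
qed

lemma sum_eq_sum_upper_bound_iff:
  fixes f g :: "'i \<Rightarrow> 'a::ordered_cancel_comm_monoid_add"
  assumes "finite I" "\<And>i. i \<in> I \<Longrightarrow> f i \<le> g i"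
  shows "sum f I = sum g I \<longleftrightarrow> (\<forall>i\<in>I. f i = g i)"
  using assms sum_mono_inv[of f I g] by (auto intro: sum.cong)

lemma if_le_half_eq_min:
  fixes n t :: nat
  shows "(if t \<le> n div 2 then t else n - t) = min t (n - t)"
  by auto

abbreviation dS_max :: "nat \<Rightarrow> nat \<Rightarrow> nat" where
  "dS_max n t \<equiv> 2 * min t (n - t)"

lemma dS_le_dS_max:
  fixes U V :: "('a::field ^ 'n) set"
  assumes "is_subspace U" "is_subspace V" "sdim U = t" "sdim V = t"
  shows "dS U V \<le> dS_max CARD('n) t"
proof -
  have "sdim (subspace_sum U V) + sdim (U \<inter> V) = t + t"
    using vec.dim_sums_Int[of U V] assms
    unfolding is_subspace_def sdim_def subspace_sum_def by simp
  moreover have "sdim (subspace_sum U V) \<le> CARD('n)"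
    unfolding sdim_def by (rule dim_subset_UNIV_cart_gen)
  ultimately show ?thesis
    unfolding dS_def by linarith
qed

lemma dS_self:
  fixes U :: "('a::field ^ 'n) set"
  assumes "is_subspace U"
  shows "dS U U = 0"
proof -
  have "subspace_sum U U = U"
    using assms unfolding subspace_sum_def is_subspace_def
    by (auto intro: vec.subspace_add) (metis add.right_neutral vec.subspace_0)
  then show ?thesis
    unfolding dS_def by simp
qed

definition maximal_component_distances :: "nat list \<Rightarrow> ('a::field ^ 'n) set list set \<Rightarrow> bool" where
  "maximal_component_distances ts C \<longleftrightarrow>
     (\<forall>F\<in>C. \<forall>F'\<in>C. F \<noteq> F' \<longrightarrow>
        (\<forall>i < length ts. dS (F ! i) (F' ! i) = dS_max CARD('n) (ts ! i)))"

lemma flag_component_dS_le: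
  fixes F F' :: "('a::field ^ 'n) set list"
  assumes "is_flag ts F" "is_flag ts F'" "i < length ts"
  shows "dS (F ! i) (F' ! i) \<le> dS_max CARD('n) (ts ! i)"
  using assms unfolding is_flag_def by (intro dS_le_dS_max) auto

lemma flag_dist_eq_sum_type:
  fixes F F' :: "('a::field ^ 'n) set list"
  assumes "is_flag ts F"
  shows "flag_dist F F' = (\<Sum>i < length ts. dS (F ! i) (F' ! i))"
  using assms unfolding flag_dist_def is_flag_def by simp

lemma flag_dist_le_max:
  fixes F F' :: "('a::field ^ 'n) set list"
  assumes "is_flag ts F" "is_flag ts F'"
  shows "flag_dist F F' \<le> (\<Sum>i < length ts. dS_max CARD('n) (ts ! i))"
  unfolding flag_dist_eq_sum_type[OF assms(1)]
  using flag_component_dS_le[OF assms] by (intro sum_mono) simp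

lemma flag_dist_eq_max_iff:
  fixes F F' :: "('a::field ^ 'n) set list"
  assumes "is_flag ts F" "is_flag ts F'"
  shows "flag_dist F F' = (\<Sum>i < length ts. dS_max CARD('n) (ts ! i)) \<longleftrightarrow>
           (\<forall>i < length ts. dS (F ! i) (F' ! i) = dS_max CARD('n) (ts ! i))"
  unfolding flag_dist_eq_sum_type[OF assms(1)]
  using flag_component_dS_le[OF assms] by (subst sum_eq_sum_upper_bound_iff) auto

lemma optimum_distance_iff_maximal_component_distances:
  fixes C :: "('a::field ^ 'n) set list set"
  assumes "flag_code ts C"
  shows "optimum_distance CARD('n) ts C \<longleftrightarrow> maximal_component_distances ts C"
proof -
  have flags: "\<And>F. F \<in> C \<Longrightarrow> is_flag ts F"
    using assms unfolding flag_code_def by blast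
  have "optimum_distance CARD('n) ts C \<longleftrightarrow>
          flag_code_dist C = (\<Sum>i < length ts. dS_max CARD('n) (ts ! i))"
    unfolding optimum_distance_def if_le_half_eq_min sum_distrib_left ..
  also have "\<dots> \<longleftrightarrow> (\<forall>F\<in>C. \<forall>F'\<in>C. F \<noteq> F' \<longrightarrow>
                  flag_dist F F' = (\<Sum>i < length ts. dS_max CARD('n) (ts ! i)))"
    unfolding flag_code_dist_def
    using assms flags by (intro Min_pairwise_eq_upper_bound_iff) (auto simp: flag_code_def flag_dist_le_max)
  also have "\<dots> \<longleftrightarrow> maximal_component_distances ts C"
    unfolding maximal_component_distances_def using flags by (simp add: flag_dist_eq_max_iff)
  finally show ?thesis .
qed

lemma disjoint_flag_code_iff_inj_on_nth:
  assumes "finite C"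
  shows "disjoint_flag_code ts C \<longleftrightarrow> (\<forall>i < length ts. inj_on (\<lambda>F. F ! i) C)"
  unfolding disjoint_flag_code_def projected_def
  using assms by (auto intro: card_image eq_card_imp_inj_on)

lemma maximal_component_distances_imp_inj_on_nth:
  fixes C :: "('a::field ^ 'n) set list set"
  assumes "flag_type CARD('n) ts" "flag_code ts C" "maximal_component_distances ts C"
    and "i < length ts"
  shows "inj_on (\<lambda>F. F ! i) C"
proof (rule inj_onI, rule ccontr)
  fix F F' assume F: "F \<in> C" "F' \<in> C" "F ! i = F' ! i" "F \<noteq> F'"
  have "0 < ts ! i" "ts ! i < CARD('n)"
    using assms(1,4) unfolding flag_type_def by auto
  moreover have "dS (F ! i) (F' ! i) = dS_max CARD('n) (ts ! i)"
    using assms(3,4) F unfolding maximal_component_distances_def by blast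
  moreover have "dS (F ! i) (F' ! i) = 0"
    using assms(2,4) F unfolding flag_code_def is_flag_def by (auto intro: dS_self)
  ultimately show False
    by simp
qed

lemma dS_code_projected_eq_max_iff:
  fixes C :: "('a::field ^ 'n) set list set"
  assumes "flag_code ts C" "inj_on (\<lambda>F. F ! i) C" "i < length ts"
  shows "dS_code (projected C i) = dS_max CARD('n) (ts ! i) \<longleftrightarrow>
           (\<forall>F\<in>C. \<forall>F'\<in>C. F \<noteq> F' \<longrightarrow> dS (F ! i) (F' ! i) = dS_max CARD('n) (ts ! i))"
proof -
  have flags: "\<And>F. F \<in> C \<Longrightarrow> is_flag ts F" and "finite C" "2 \<le> card C"
    using assms(1) unfolding flag_code_def by auto
  have "card (projected C i) = card C"
    unfolding projected_def using assms(2) by (rule card_image)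
  then have two: "2 \<le> card (projected C i)"
    using \<open>2 \<le> card C\<close> by simp
  have fin: "finite (projected C i)"
    unfolding projected_def using \<open>finite C\<close> by simp
  have bound: "dS U V \<le> dS_max CARD('n) (ts ! i)"
    if "U \<in> projected C i" "V \<in> projected C i" for U V
    using that assms(3) flags flag_component_dS_le unfolding projected_def by blast
  have "dS_code (projected C i) =
      Min {dS U V | U V. U \<in> projected C i \<and> V \<in> projected C i \<and> U \<noteq> V}"
    using two unfolding dS_code_def by simp
  then have "dS_code (projected C i) = dS_max CARD('n) (ts ! i) \<longleftrightarrow>
      (\<forall>U\<in>projected C i. \<forall>V\<in>projected C i. U \<noteq> V \<longrightarrow>
         dS U V = dS_max CARD('n) (ts ! i))"
    using Min_pairwise_eq_upper_bound_iff[OF fin two bound] by simp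
  then show ?thesis
    unfolding projected_def by (simp add: inj_on_eq_iff[OF assms(2)])
qed

lemma disjoint_and_projected_max_iff_maximal_component_distances:
  fixes C :: "('a::field ^ 'n) set list set"
  assumes "flag_type CARD('n) ts" "flag_code ts C"
  shows "disjoint_flag_code ts C \<and>
           (\<forall>i < length ts. dS_code (projected C i) = min (2 * ts ! i) (2 * (CARD('n) - ts ! i)))
         \<longleftrightarrow> maximal_component_distances ts C"
proof -
  have "finite C"
    using assms(2) unfolding flag_code_def by blast
  then have "disjoint_flag_code ts C \<and>
        (\<forall>i < length ts. dS_code (projected C i) = min (2 * ts ! i) (2 * (CARD('n) - ts ! i)))
      \<longleftrightarrow> (\<forall>i < length ts. inj_on (\<lambda>F. F ! i) C) \<and>
        (\<forall>i < length ts. dS_code (projected C i) = dS_max CARD('n) (ts ! i))"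
    by (simp add: disjoint_flag_code_iff_inj_on_nth nat_mult_min_right)
  also have "\<dots> \<longleftrightarrow> maximal_component_distances ts C"
  proof
    assume "(\<forall>i < length ts. inj_on (\<lambda>F. F ! i) C) \<and>
        (\<forall>i < length ts. dS_code (projected C i) = dS_max CARD('n) (ts ! i))"
    then show "maximal_component_distances ts C"
      unfolding maximal_component_distances_def
      using dS_code_projected_eq_max_iff[OF assms(2)] by blast
  next
    assume max: "maximal_component_distances ts C"
    then have inj: "\<forall>i < length ts. inj_on (\<lambda>F. F ! i) C"
      using maximal_component_distances_imp_inj_on_nth[OF assms] by blast
    moreover have "\<forall>i < length ts. dS_code (projected C i) = dS_max CARD('n) (ts ! i)"
      using max inj dS_code_projected_eq_max_iff[OF assms(2)]
      unfolding maximal_component_distances_def by blast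
    ultimately show "(\<forall>i < length ts. inj_on (\<lambda>F. F ! i) C) \<and>
        (\<forall>i < length ts. dS_code (projected C i) = dS_max CARD('n) (ts ! i))" ..
  qed
  finally show ?thesis .
qed

theorem theorem3p11:
  fixes C :: "('a::{field,finite} ^ 'n) set list set" and ts :: "nat list"
  assumes "CARD('n) > 1"
    and "flag_type CARD('n) ts"
    and "flag_code ts C"
  shows "optimum_distance CARD('n) ts C \<longleftrightarrow>
           disjoint_flag_code ts C \<and>
           (\<forall>i < length ts. dS_code (projected C i) = min (2 * ts ! i) (2 * (CARD('n) - ts ! i)))"
  using optimum_distance_iff_maximal_component_distances[OF assms(3)]
    disjoint_and_projected_max_iff_maximal_component_distances[OF assms(2,3)]
  by simp

end
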